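(* Let $n,k\ge 1$ be integers and let $M=V^{\otimes k}\otimes (V^* )^{\otimes k}$, where $V=\mathbb{C}^n$. For $1\le i\le k$ let $p_i=\frac1n c_{i,i}$. Then $$\ker p_1\cap \ker p_2\cap\cdots\cap \ker p_k=(\mathrm{id}-p_1)(\mathrm{id}-p_2)\cdots(\mathrm{id}-p_k)M .$$
   Context: $V=\mathbb{C}^n$ is the space of $n\times 1$ column vectors with standard basis $v_1,\dots,v_n$; $V^*$ is the space of $1\times n$ row vectors with dual basis $v_1^*,\dots,v_n^*$ ($v_i^*$ has a $1$ in column $i$ and $0$ elsewhere). For $1\le i,j\le k$ the contraction map $c_{i,j}:M\to M$ is the linear map $$c_{i,j}(u_1\otimes\cdots\otimes u_k\otimes w_1^*\otimes\cdots\otimes w_k^* )=(w_j^*u_i)\sum_{\ell=1}^n u_1\otimes\cdots\otimes v_\ell\otimes\cdots\otimes u_k\otimes w_1^*\otimes\cdots\otimes v_\ell^*\otimes\cdots\otimes w_k^*,$$ where $v_\ell$ replaces $u_i$ in the $i$th slot of $V^{\otimes k}$, $v_\ell^*$ replaces $w_j^*$ in the $j$th slot of $(V^* )^{\otimes k}$, and $w_j^*u_i\in\mathbb{C}$ is the matrix product (equal to $\mathrm{tr}(u_iw_j^* )$). One has $c_{i,i}^2=nc_{i,i}$, so $p_i$ is an idempotent; $\mathrm{id}$ is the identity map of $M$. *)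

theory Defs
  imports Complex_Main
begin

text \<open>Index tuples: a list of length k with entries in {0..<n}; entry m (0-based) of the list
  is the index of the basis vector in slot m+1.\<close>
definition idx :: "nat \<Rightarrow> nat \<Rightarrow> nat list set" where
  "idx n k = {xs. length xs = k \<and> set xs \<subseteq> {..<n}}"

text \<open>An element of M = V^(tensor k) tensor (V*)^(tensor k) is given by its coordinates
  w.r.t. the basis v_a1 x ... x v_ak x v_b1* x ... x v_bk*, indexed by pairs (a,b).\<close>
type_synonym tensor = "nat list \<times> nat list \<Rightarrow> complex"

definition tensM :: "nat \<Rightarrow> nat \<Rightarrow> tensor set" where
  "tensM n k = {T. \<forall>ab. ab \<notin> idx n k \<times> idx n k \<longrightarrow> T ab = 0}"

definition basis_t :: "nat list \<Rightarrow> nat list \<Rightarrow> tensor" where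
  "basis_t a b = (\<lambda>x. if x = (a, b) then 1 else 0)"

text \<open>Contraction c_{i,j} (1 <= i,j <= k), defined on basis tensors as in the paper
  (w_j^* u_i = [a_i = b_j], v_l replaces slot i, v_l^* replaces slot j) and extended linearly.\<close>
definition contr :: "nat \<Rightarrow> nat \<Rightarrow> nat \<Rightarrow> nat \<Rightarrow> tensor \<Rightarrow> tensor" where
  "contr n k i j T = (\<lambda>x. \<Sum>ab\<in>idx n k \<times> idx n k.
      T ab * (if fst ab ! (i - 1) = snd ab ! (j - 1) then 1 else 0) *
      (\<Sum>l<n. basis_t ((fst ab)[i - 1 := l]) ((snd ab)[j - 1 := l]) x))"

definition proj :: "nat \<Rightarrow> nat \<Rightarrow> nat \<Rightarrow> tensor \<Rightarrow> tensor" where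
  "proj n k i T = (\<lambda>x. contr n k i i T x / of_nat n)"

text \<open>(id - p_1)(id - p_2)...(id - p_k), composed as operators (p_k applied first).\<close>
definition prod_op :: "nat \<Rightarrow> nat \<Rightarrow> tensor \<Rightarrow> tensor" where
  "prod_op n k = foldr (\<lambda>i f. (\<lambda>T x. T x - proj n k i T x) \<circ> f) [1..<k+1] id"

end

(* In coordinates, c_{i,i} keeps only the coefficients with a_i = b_i and replaces each by
   the sum of its neighbours along the diagonal of slot i.  Hence c_{i,i}^2 = n c_{i,i}, and
   contractions in different slots commute, so the p_i are commuting additive idempotents.
   For any such family the common kernel is the image of the product of the id - p_i:
   p_i kills id - p_i and commutes past the other factors, while on the common kernel every
   factor, hence the product, acts as the identity. *)

theory Submission
  imports Defs "HOL-Library.Function_Algebras"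
begin

definition compl_prod :: "('i \<Rightarrow> 'a \<Rightarrow> 'a) \<Rightarrow> 'i list \<Rightarrow> 'a \<Rightarrow> 'a::group_add" where
  "compl_prod P L = foldr (\<lambda>i f. (\<lambda>x. x - P i x) \<circ> f) L id"

lemma compl_prod_Nil [simp]: "compl_prod P [] x = x"
  by (simp add: compl_prod_def)

lemma compl_prod_Cons [simp]:
  "compl_prod P (i # L) x = compl_prod P L x - P i (compl_prod P L x)"
  by (simp add: compl_prod_def)

lemma compl_prod_closed:
  assumes "\<And>i. i \<in> set L \<Longrightarrow> P i ` X \<subseteq> X"
    and "\<And>x y. x \<in> X \<Longrightarrow> y \<in> X \<Longrightarrow> x - y \<in> X"
    and "x \<in> X"
  shows "compl_prod P L x \<in> X"
  using assms(1) by (induction L) (auto intro: assms(2,3))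

lemma compl_prod_eq_self:
  assumes "\<And>i. i \<in> set L \<Longrightarrow> P i x = 0"
  shows "compl_prod P L x = x"
  using assms by (induction L) auto

lemma compl_prod_in_kernel:
  fixes P :: "'i \<Rightarrow> 'a \<Rightarrow> 'a::ab_group_add"
  assumes "\<And>i. i \<in> set L \<Longrightarrow> additive (P i)"
    and "\<And>i x. i \<in> set L \<Longrightarrow> P i (P i x) = P i x"
    and "\<And>i j x. i \<in> set L \<Longrightarrow> j \<in> set L \<Longrightarrow> P i (P j x) = P j (P i x)"
    and "i \<in> set L"
  shows "P i (compl_prod P L x) = 0"
  using assms
proof (induction L)
  case Nil
  then show ?case by simp
next
  case (Cons j L)
  let ?S = "compl_prod P L x"
  have "P i (compl_prod P (j # L) x) = P i ?S - P i (P j ?S)"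
    using Cons.prems by (simp add: additive.diff)
  also have "\<dots> = 0"
  proof (cases "i = j")
    case False
    then have "P i ?S = 0"
      using Cons by simp
    moreover have "P i (P j ?S) = P j (P i ?S)"
      using Cons.prems by simp
    ultimately show ?thesis
      using Cons.prems by (simp add: additive.zero)
  qed (use Cons.prems in simp)
  finally show ?case .
qed

theorem common_kernel_eq_image_compl_prod:
  fixes P :: "'i \<Rightarrow> 'a \<Rightarrow> 'a::ab_group_add"
  assumes "\<And>i. i \<in> set L \<Longrightarrow> additive (P i)"
    and "\<And>i x. i \<in> set L \<Longrightarrow> P i (P i x) = P i x"
    and "\<And>i j x. i \<in> set L \<Longrightarrow> j \<in> set L \<Longrightarrow> P i (P j x) = P j (P i x)"
    and "\<And>i. i \<in> set L \<Longrightarrow> P i ` X \<subseteq> X"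
    and "\<And>x y. x \<in> X \<Longrightarrow> y \<in> X \<Longrightarrow> x - y \<in> X"
  shows "{x \<in> X. \<forall>i\<in>set L. P i x = 0} = compl_prod P L ` X"
proof (intro equalityI subsetI)
  fix x assume x: "x \<in> {x \<in> X. \<forall>i\<in>set L. P i x = 0}"
  then have "compl_prod P L x = x"
    by (simp add: compl_prod_eq_self)
  with x show "x \<in> compl_prod P L ` X"
    by (metis (no_types, lifting) image_eqI mem_Collect_eq)
next
  fix y assume "y \<in> compl_prod P L ` X"
  then obtain x where x: "x \<in> X" and y: "y = compl_prod P L x"
    by blast
  have "y \<in> X"
    unfolding y by (rule compl_prod_closed[OF assms(4,5) x])
  moreover have "P i y = 0" if "i \<in> set L" for i
    unfolding y using assms(1-3) that by (rule compl_prod_in_kernel)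
  ultimately show "y \<in> {x \<in> X. \<forall>i\<in>set L. P i x = 0}"
    by simp
qed

lemma finite_idx: "finite (idx n k)"
proof (rule finite_subset)
  show "idx n k \<subseteq> {xs. set xs \<subseteq> {..<n} \<and> length xs = k}"
    by (auto simp: idx_def)
qed (rule finite_lists_length_eq, simp)

lemma length_idx: "a \<in> idx n k \<Longrightarrow> length a = k"
  by (simp add: idx_def)

lemma nth_idx_less: "a \<in> idx n k \<Longrightarrow> p < k \<Longrightarrow> a ! p < n"
  by (auto simp: idx_def dest!: nth_mem)

lemma idx_update: "a \<in> idx n k \<Longrightarrow> m < n \<Longrightarrow> a[p := m] \<in> idx n k"
  unfolding idx_def using set_update_subset_insert by fastforce

definition diag_contr :: "nat \<Rightarrow> nat \<Rightarrow> nat \<Rightarrow> tensor \<Rightarrow> tensor" where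
  "diag_contr n k p T = (\<lambda>(a, b). if a \<in> idx n k \<and> b \<in> idx n k \<and> a ! p = b ! p
     then \<Sum>m<n. T (a[p := m], b[p := m]) else 0)"

lemma contr_eq_diag_contr:
  assumes "p < k"
  shows "contr n k (Suc p) (Suc p) T = diag_contr n k p T"
proof (rule ext, clarify)
  fix a b
  let ?I = "idx n k \<times> idx n k"
  let ?good = "a \<in> idx n k \<and> b \<in> idx n k \<and> a ! p = b ! p"
  let ?P = "\<lambda>((a', b'), l). a' ! p = b' ! p \<and> a'[p := l] = a \<and> b'[p := l] = b"
  let ?S = "{s \<in> ?I \<times> {..<n}. ?P s}"
  have "contr n k (Suc p) (Suc p) T (a, b) =
      (\<Sum>a'b'\<in>?I. \<Sum>l<n. if ?P (a'b', l) then T a'b' else 0)"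
    unfolding contr_def
    by (intro sum.cong refl) (auto simp: sum_distrib_left basis_t_def intro!: sum.cong)
  also have "\<dots> = (\<Sum>s\<in>?I \<times> {..<n}. if ?P s then T (fst s) else 0)"
    by (auto simp: sum.cartesian_product intro!: sum.cong)
  also have "\<dots> = (\<Sum>s\<in>?S. T (fst s))"
    by (rule sum.inter_filter[symmetric]) (simp add: finite_idx)
  \<comment> \<open>A summand ((a', b'), l) of the contraction lands on (a, b) exactly when l = a ! p and
    (a', b') = (a[p := m], b[p := m]) for m = a' ! p, which must then be a diagonal pair.\<close>
  also have "\<dots> = (\<Sum>m | m < n \<and> ?good. T (a[p := m], b[p := m]))"
  proof (rule sum.reindex_bij_witness[where i = "\<lambda>m. ((a[p := m], b[p := m]), a ! p)"
        and j = "\<lambda>((a', b'), l). a' ! p"])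
  qed (use assms in \<open>auto simp: length_idx idx_update nth_idx_less, (metis list_update_id)+\<close>)
  also have "\<dots> = diag_contr n k p T (a, b)"
    by (cases ?good) (auto simp: diag_contr_def lessThan_def)
  finally show "contr n k (Suc p) (Suc p) T (a, b) = diag_contr n k p T (a, b)" .
qed

lemma diag_contr_in_tensM: "diag_contr n k p T \<in> tensM n k"
  by (auto simp: tensM_def diag_contr_def)

lemma additive_diag_contr: "additive (diag_contr n k p)"
  by unfold_locales (auto simp: diag_contr_def sum.distrib)

lemma diag_contr_divide: "diag_contr n k p (\<lambda>x. T x / c) = (\<lambda>x. diag_contr n k p T x / c)"
  by (auto simp: diag_contr_def sum_divide_distrib)

lemma diag_contr_diag_contr_neq:
  assumes "p \<noteq> r"
  shows "diag_contr n k p (diag_contr n k r T) (a, b) =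
    (if a \<in> idx n k \<and> b \<in> idx n k \<and> a ! p = b ! p \<and> a ! r = b ! r
     then \<Sum>m<n. \<Sum>m'<n. T (a[p := m, r := m'], b[p := m, r := m']) else 0)"
  using assms by (auto simp: diag_contr_def idx_update nth_list_update_neq intro!: sum.cong)

lemma diag_contr_commute:
  assumes "p \<noteq> r"
  shows "diag_contr n k p (diag_contr n k r T) = diag_contr n k r (diag_contr n k p T)"
proof (rule ext, clarify)
  fix a b
  have "(\<Sum>m<n. \<Sum>m'<n. T (a[p := m, r := m'], b[p := m, r := m'])) =
        (\<Sum>m'<n. \<Sum>m<n. T (a[r := m', p := m], b[r := m', p := m]))"
    using assms by (subst sum.swap) (simp add: list_update_swap)
  then show "diag_contr n k p (diag_contr n k r T) (a, b) = diag_contr n k r (diag_contr n k p T) (a, b)"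
    using assms by (auto simp: diag_contr_diag_contr_neq)
qed

lemma diag_contr_idem:
  assumes "p < k"
  shows "diag_contr n k p (diag_contr n k p T) = (\<lambda>x. of_nat n * diag_contr n k p T x)"
proof (rule ext, clarify)
  fix a b
  show "diag_contr n k p (diag_contr n k p T) (a, b) = of_nat n * diag_contr n k p T (a, b)"
  proof (cases "a \<in> idx n k \<and> b \<in> idx n k \<and> a ! p = b ! p")
    case True
    then have "diag_contr n k p T (a[p := m], b[p := m]) = diag_contr n k p T (a, b)" if "m < n" for m
      using True assms that by (auto simp: diag_contr_def idx_update length_idx)
    then show ?thesis
      using True by (simp add: diag_contr_def)
  qed (auto simp: diag_contr_def)
qed

lemma proj_eq_diag_contr:
  "i \<in> {1..k} \<Longrightarrow> proj n k i T = (\<lambda>x. diag_contr n k (i - 1) T x / of_nat n)"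
  using contr_eq_diag_contr[of "i - 1" k n T] by (auto simp: proj_def)

lemma proj_in_tensM: "i \<in> {1..k} \<Longrightarrow> proj n k i T \<in> tensM n k"
  using diag_contr_in_tensM by (simp add: proj_eq_diag_contr tensM_def)

lemma additive_proj:
  assumes "i \<in> {1..k}"
  shows "additive (proj n k i)"
proof
  fix S T :: tensor
  show "proj n k i (S + T) = proj n k i S + proj n k i T"
    using assms additive.add[OF additive_diag_contr]
    by (simp add: proj_eq_diag_contr plus_fun_def add_divide_distrib)
qed

lemma proj_idem:
  assumes "n \<ge> 1" and "i \<in> {1..k}"
  shows "proj n k i (proj n k i T) = proj n k i T"
proof -
  have "i - 1 < k"
    using assms(2) by auto
  then show ?thesis
    using assms by (simp add: proj_eq_diag_contr diag_contr_divide diag_contr_idem)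
qed

lemma proj_commute:
  assumes "i \<in> {1..k}" and "j \<in> {1..k}"
  shows "proj n k i (proj n k j T) = proj n k j (proj n k i T)"
proof (cases "i = j")
  case False
  then have "i - 1 \<noteq> j - 1"
    using assms by auto
  then show ?thesis
    using assms by (simp add: proj_eq_diag_contr diag_contr_divide diag_contr_commute)
qed simp

lemma tensM_diff: "S \<in> tensM n k \<Longrightarrow> T \<in> tensM n k \<Longrightarrow> S - T \<in> tensM n k"
  by (simp add: tensM_def)

lemma prod_op_eq_compl_prod: "prod_op n k = compl_prod (proj n k) [1..<k+1]"
  by (simp add: prod_op_def compl_prod_def fun_diff_def)

theorem proposition1p5:
  fixes n k :: nat
  assumes "n \<ge> 1" and "k \<ge> 1"
  shows "{T \<in> tensM n k. \<forall>i\<in>{1..k}. proj n k i T = (\<lambda>_. 0)} = prod_op n k ` tensM n k"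
proof -
  have indices: "set [1..<k+1] = {1..k}"
    by auto
  have "{T \<in> tensM n k. \<forall>i\<in>set [1..<k+1]. proj n k i T = 0} =
      compl_prod (proj n k) [1..<k+1] ` tensM n k"
    by (rule common_kernel_eq_image_compl_prod)
      (use assms(1) indices in \<open>blast intro: additive_proj proj_idem proj_commute proj_in_tensM tensM_diff\<close>)+
  then show ?thesis
    by (simp only: indices prod_op_eq_compl_prod zero_fun_def)
qed

end
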